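(* For the $k$-server problem on the line, for every instance $I$, every prediction, and every $\lambda\in[0,1]$, there is $c>0$ depending only on the initial configuration such that $\mathrm{LambdaDC}(I)\le\alpha(k)\cdot\mathrm{FtP}(I)+c$, where $\alpha(k)=1+2\lambda+\dots+2\lambda^{(k-1)/2}$ if $k$ is odd and $\alpha(k)=1+2\lambda+\dots+2\lambda^{k/2-1}+\lambda^{k/2}$ if $k$ is even.
   Context: The $k$-server problem on the line: servers on $\mathbb{R}$ labeled $s_1\le\dots\le s_k$, requests revealed online and served by moving a server to them; cost = total distance moved. A prediction gives for each request $r_t$ an index $p_t\in\{1,\dots,k\}$; FtP serves each request by server $s_{p_t}$ (relabeling by position), $\mathrm{FtP}(I)$ being its cost. LambdaDC with parameter $\lambda$: if $r_t<s_1$ or $r_t>s_k$, move only the closest server; if $s_i<r_t<s_{i+1}$ and $p_t\le i$, move $s_i$ at speed $1$ and $s_{i+1}$ at speed $\lambda$ towards $r_t$ until one reaches it; if $p_t\ge i+1$, the speeds are swapped. *)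

theory Defs
  imports Main "HOL.Real"
begin

(* Configurations: a list of k server positions, sorted (s_1 <= ... <= s_k).
   Server indices in the paper are 1-based; list index i-1 holds s_i.
   A step of an instance is a pair (r_t, p_t): request position and predicted index. *)

(* Follow-the-Prediction: move server s_{p} (p-th by position) to r, then relabel
   by position (re-sort). *)
fun ftp_cost :: "real list \<Rightarrow> (real \<times> nat) list \<Rightarrow> real" where
  "ftp_cost s [] = 0"
| "ftp_cost s ((r, p) # rs) =
     \<bar>s ! (p - 1) - r\<bar> + ftp_cost (sort (s[p - 1 := r])) rs"

definition ldc_step :: "real \<Rightarrow> real list \<Rightarrow> real \<Rightarrow> nat \<Rightarrow> real list \<times> real" where
  "ldc_step lam s r p =
    (if r \<in> set s then (s, 0)
     else if r < hd s then (s[0 := r], hd s - r)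
     else if last s < r then (s[length s - 1 := r], r - last s)
     else
       (let j = (GREATEST j. j < length s \<and> s ! j < r);
            d1 = r - s ! j;
            d2 = s ! (j + 1) - r
        in if p \<le> j + 1 then
             (let T = (if lam * d1 \<le> d2 then d1 else d2 / lam)
              in (s[j := s ! j + T, j + 1 := s ! (j + 1) - lam * T], (1 + lam) * T))
           else
             (let T = (if lam * d2 \<le> d1 then d2 else d1 / lam)
              in (s[j := s ! j + lam * T, j + 1 := s ! (j + 1) - T], (1 + lam) * T))))"

fun ldc_cost :: "real \<Rightarrow> real list \<Rightarrow> (real \<times> nat) list \<Rightarrow> real" where
  "ldc_cost lam s [] = 0"
| "ldc_cost lam s ((r, p) # rs) =
     snd (ldc_step lam s r p) + ldc_cost lam (fst (ldc_step lam s r p)) rs"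

definition alpha_k :: "real \<Rightarrow> nat \<Rightarrow> real" where
  "alpha_k lam k =
    (if odd k then 1 + 2 * (\<Sum>j = 1..(k - 1) div 2. lam ^ j)
     else 1 + 2 * (\<Sum>j = 1..k div 2 - 1. lam ^ j) + lam ^ (k div 2))"

end

theory Submission
  imports Defs "HOL-Library.Multiset"
begin

text \<open>
  Let \<open>x\<close> and \<open>y\<close> be the sorted configurations of LambdaDC and of FtP, and consider the
  potential \<open>\<Phi> x y = \<alpha> * (\<Sum>j. \<bar>x j - y j\<bar>) + (\<Sum>j. c j * x j)\<close> with coefficients satisfying
  \<open>c (k - 1 - j) = - c j\<close>, and \<open>c j \<le> 0\<close> for \<open>2 * j < k\<close>. Then \<open>\<Phi>\<close> is nonnegative, so \<open>\<Phi> s\<^sub>0 s\<^sub>0\<close>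
  serves as the additive constant once we show that on every request the cost of LambdaDC
  plus the increase of \<open>\<Phi>\<close> is at most \<open>\<alpha>\<close> times the cost of FtP. FtP's move raises \<open>\<Phi>\<close> by at
  most \<open>\<alpha>\<close> times its length (triangle inequality); LambdaDC's move then lowers \<open>\<Phi>\<close> by at least
  its cost, which comes down to the linear inequality \<open>coeff_push\<close> on the coefficients. It is
  satisfied with \<open>\<alpha> = 1 + 2 * (w 1 + w 2 + \<dots>)\<close> and \<open>c j = - 2 * (w (j + 1) + \<dots> + w (k - 1 - j))\<close>
  for \<open>2 * j < k\<close>, where \<open>w s = \<lambda> ^ s\<close> for \<open>2 * s < k\<close>, \<open>w s = \<lambda> ^ s / 2\<close> for \<open>2 * s = k\<close> and \<open>w s = 0\<close>
  otherwise; this \<open>\<alpha>\<close> is \<open>\<alpha>(k)\<close>. Reflecting the line reverses the servers and leaves \<open>\<Phi>\<close>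
  invariant, so only requests left of all servers and moves in which the left neighbour of
  the request is the fast server need to be analysed.
\<close>

section \<open>Reflection of the line\<close>

definition mirror :: "real list \<Rightarrow> real list" where
  "mirror xs = rev (map uminus xs)"

lemma length_mirror [simp]: "length (mirror xs) = length xs"
  by (simp add: mirror_def)

lemma nth_mirror: "i < length xs \<Longrightarrow> mirror xs ! i = - xs ! (length xs - Suc i)"
  by (simp add: mirror_def rev_nth)

lemma sorted_mirror [simp]: "sorted (mirror xs) \<longleftrightarrow> sorted xs"
  by (simp add: mirror_def sorted_wrt_rev sorted_wrt_map)

lemma mirror_update:
  "i < length xs \<Longrightarrow> mirror (xs[i := v]) = (mirror xs)[length xs - Suc i := - v]"
  by (simp add: mirror_def map_update rev_update)

lemma sort_mirror: "sort (mirror xs) = mirror (sort xs)"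
proof (rule properties_for_sort)
  show "mset (mirror (sort xs)) = mset (mirror xs)"
    by (simp add: mirror_def)
qed simp

lemma sum_mirror:
  assumes "length xs = n" "length ys = n"
  shows "(\<Sum>j<n. f j (mirror xs ! j) (mirror ys ! j)) = (\<Sum>j<n. f (n - Suc j) (- xs ! j) (- ys ! j))"
proof -
  have "(\<Sum>j<n. f j (mirror xs ! j) (mirror ys ! j))
      = (\<Sum>j<n. f (n - Suc (n - Suc j)) (- xs ! (n - Suc j)) (- ys ! (n - Suc j)))"
    by (rule sum.cong) (use assms in \<open>auto simp: nth_mirror Suc_diff_Suc\<close>)
  also have "\<dots> = (\<Sum>j<n. f (n - Suc j) (- xs ! j) (- ys ! j))"
    by (rule sum.nat_diff_reindex)
  finally show ?thesis .
qed

section \<open>Re-sorting a configuration after one server moves\<close>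

lemma sort_update_ge_split:
  fixes y :: "real list"
  assumes sorted: "sorted y" and p: "p < length y" and le: "y ! p \<le> r"
  obtains B1 B2 where "y = take p y @ y ! p # B1 @ B2" "\<forall>v\<in>set B1. v < r" "\<forall>v\<in>set B2. r \<le> v"
    and "sort (y[p := r]) = take p y @ B1 @ r # B2"
proof
  define B1 where "B1 = takeWhile (\<lambda>v. v < r) (drop (Suc p) y)"
  define B2 where "B2 = dropWhile (\<lambda>v. v < r) (drop (Suc p) y)"
  show y: "y = take p y @ y ! p # B1 @ B2"
    unfolding B1_def B2_def using p by (simp add: id_take_nth_drop[symmetric])
  show B1: "\<forall>v\<in>set B1. v < r" by (auto simp: B1_def dest: set_takeWhileD)
  show B2: "\<forall>v\<in>set B2. r \<le> v"
  proof
    fix v assume v: "v \<in> set B2"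
    have "sorted B2" using sorted by (subst (asm) y) (simp add: sorted_append)
    with v have "hd B2 \<le> v" by (cases B2) auto
    moreover have "B2 \<noteq> []" using v by auto
    then have "\<not> hd B2 < r" unfolding B2_def by (rule hd_dropWhile)
    ultimately show "r \<le> v" by simp
  qed
  show "sort (y[p := r]) = take p y @ B1 @ r # B2"
  proof (rule properties_for_sort)
    show "mset (take p y @ B1 @ r # B2) = mset (y[p := r])"
      using p by (subst (2) y) (simp add: list_update_append)
    show "sorted (take p y @ B1 @ r # B2)"
      using sorted le B1 B2 by (subst (asm) y) (fastforce simp: sorted_append)
  qed
qed

lemma sort_update_ge_nth:
  fixes y :: "real list"
  assumes sorted: "sorted y" and p: "p < length y" and le: "y ! p \<le> r"
  obtains q where "p \<le> q" "q < length y"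
    and "\<And>j. j < p \<Longrightarrow> sort (y[p := r]) ! j = y ! j"
    and "\<And>j. p \<le> j \<Longrightarrow> j < q \<Longrightarrow> sort (y[p := r]) ! j = y ! Suc j \<and> y ! Suc j < r"
    and "sort (y[p := r]) ! q = r"
    and "\<And>j. q < j \<Longrightarrow> j < length y \<Longrightarrow> sort (y[p := r]) ! j = y ! j \<and> r \<le> y ! j"
proof -
  obtain B1 B2 where y: "y = take p y @ y ! p # B1 @ B2" and B1: "\<forall>v\<in>set B1. v < r"
    and B2: "\<forall>v\<in>set B2. r \<le> v" and y': "sort (y[p := r]) = take p y @ B1 @ r # B2"
    using sort_update_ge_split[OF assms] by blast
  define A where "A = take p y"
  have lA: "length A = p" using p by (simp add: A_def)
  define q where "q = p + length B1"
  have ly: "length y = Suc (p + length B1 + length B2)" by (subst y) (simp add: lA flip: A_def)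
  show thesis
  proof
    show "p \<le> q" "q < length y" using ly by (simp_all add: q_def)
    show "sort (y[p := r]) ! j = y ! j" if "j < p" for j
      using that p by (simp add: y' nth_append)
    show "sort (y[p := r]) ! j = y ! Suc j \<and> y ! Suc j < r" if "p \<le> j" "j < q" for j
    proof -
      have j: "j - p < length B1" using that by (simp add: q_def)
      then have "y ! Suc j = B1 ! (j - p)" using that by (subst y) (simp add: nth_append lA Suc_diff_le flip: A_def)
      then show ?thesis using that j B1 by (simp add: y' nth_append lA flip: A_def)
    qed
    show "sort (y[p := r]) ! q = r" by (simp add: y' nth_append lA q_def flip: A_def)
    show "sort (y[p := r]) ! j = y ! j \<and> r \<le> y ! j" if "q < j" "j < length y" for j
    proof -
      have j: "\<not> j - Suc p < length B1" "\<not> j - p < length B1" "j - Suc q < length B2"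
        using that ly by (simp_all add: q_def)
      then have "y ! j = B2 ! (j - Suc q)"
        using that by (subst y) (simp add: nth_append lA q_def Suc_diff_le flip: A_def)
      then show ?thesis using that j B2 by (simp add: y' nth_append lA q_def flip: A_def)
    qed
  qed
qed

lemma sort_update_ge:
  fixes y :: "real list"
  assumes sorted: "sorted y" and p: "p < length y" and le: "y ! p \<le> r"
  defines "y' \<equiv> sort (y[p := r])"
  shows sort_update_ge_pointwise: "j < length y \<Longrightarrow> y ! j \<le> y' ! j"
    and sort_update_ge_above: "j < length y \<Longrightarrow> r < y' ! j \<Longrightarrow> y' ! j = y ! j"
    and sort_update_ge_below: "j \<le> p \<Longrightarrow> y' ! j \<le> r"
    and sort_update_ge_gap:
      "p \<le> i \<Longrightarrow> i < length y \<Longrightarrow> y' ! i < r \<Longrightarrow> r - y' ! i \<le> (\<Sum>j\<in>{Suc i..<length y}. y' ! j - y ! j)"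
proof -
  obtain q where q: "p \<le> q" "q < length y"
    and lo: "\<And>j. j < p \<Longrightarrow> y' ! j = y ! j"
    and mid: "\<And>j. p \<le> j \<Longrightarrow> j < q \<Longrightarrow> y' ! j = y ! Suc j \<and> y ! Suc j < r"
    and at: "y' ! q = r"
    and hi: "\<And>j. q < j \<Longrightarrow> j < length y \<Longrightarrow> y' ! j = y ! j \<and> r \<le> y ! j"
    using sort_update_ge_nth[OF assms(1-3)] unfolding y'_def by blast
  have mono: "y ! a \<le> y ! b" if "a \<le> b" "b < length y" for a b
    using sorted that by (rule sorted_nth_mono)
  have y_q: "y ! q \<le> r"
  proof (cases "p = q")
    case False
    then have "p \<le> q - 1" "q - 1 < q" "Suc (q - 1) = q" using q(1) by auto
    then show ?thesis using mid[of "q - 1"] by auto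
  qed (use le in simp)
  show pointwise: "y ! j \<le> y' ! j" if "j < length y" for j
    using lo[of j] mid[of j] hi[of j] mono[of j "Suc j"] that q y_q at
    by (cases "j < p"; cases "j < q"; cases "j = q") auto
  show "y' ! j = y ! j" if "j < length y" "r < y' ! j" for j
    using lo[of j] mid[of j] hi[of j] that at by (cases "j < p"; cases "j < q"; cases "j = q") auto
  show "y' ! j \<le> r" if "j \<le> p" for j
    using lo[of j] mid[of j] mono[of j p] that p q le at by (cases "j = p"; cases "p = q") auto
  assume i: "p \<le> i" "i < length y" and y'_i: "y' ! i < r"
  have iq: "i < q"
    using hi[of i] at i y'_i by (cases "i < q"; cases "i = q") auto
  have "r - y' ! i = (\<Sum>j\<in>{Suc i..<q}. y ! Suc j - y ! j) + (r - y ! q)"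
    using mid[OF i(1) iq] iq at by (simp add: sum_Suc_diff')
  also have "\<dots> = (\<Sum>j\<in>{Suc i..<Suc q}. y' ! j - y ! j)"
    using iq i(1) by (simp add: mid at)
  also have "\<dots> \<le> (\<Sum>j\<in>{Suc i..<length y}. y' ! j - y ! j)"
    using q pointwise by (intro sum_mono2) auto
  finally show "r - y' ! i \<le> (\<Sum>j\<in>{Suc i..<length y}. y' ! j - y ! j)" .
qed

lemma sort_update_le_above:
  fixes y :: "real list"
  assumes sorted: "sorted y" and p: "p < length y" and le: "r \<le> y ! p"
    and j: "p \<le> j" "j < length y"
  shows "r \<le> sort (y[p := r]) ! j"
proof -
  let ?n = "length y"
  have "mirror y ! (?n - Suc p) \<le> - r" using p le by (simp add: nth_mirror)
  then have "sort ((mirror y)[?n - Suc p := - r]) ! (?n - Suc j) \<le> - r"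
    using sorted p j by (intro sort_update_ge_below) auto
  then show ?thesis
    using p j by (simp add: mirror_update[symmetric] sort_mirror nth_mirror)
qed

lemma sum_abs_sort_update:
  fixes y :: "real list"
  assumes sorted: "sorted y" and p: "p < length y"
  shows "(\<Sum>j<length y. \<bar>sort (y[p := r]) ! j - y ! j\<bar>) = \<bar>y ! p - r\<bar>"
proof -
  have oriented: "(\<Sum>j<length y. \<bar>sort (y[p := r]) ! j - y ! j\<bar>) = r - y ! p"
    if "sorted y" "p < length y" "y ! p \<le> r" for y :: "real list" and p r
  proof -
    have "(\<Sum>j<length y. \<bar>sort (y[p := r]) ! j - y ! j\<bar>) = sum_list (sort (y[p := r])) - sum_list y"
      using sort_update_ge_pointwise[OF that]
      by (simp add: sum_list_sum_nth atLeast0LessThan sum_subtractf[symmetric])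
    also have "\<dots> = r - y ! p"
      using that by (simp add: sum_mset_sum_list[symmetric] mset_update sum_mset.remove[of "y ! p"])
    finally show ?thesis .
  qed
  show ?thesis
  proof (cases "y ! p \<le> r")
    case True
    then show ?thesis using oriented[OF sorted p] by simp
  next
    case False
    let ?n = "length y"
    have "(\<Sum>j<?n. \<bar>sort (y[p := r]) ! j - y ! j\<bar>)
        = (\<Sum>j<?n. \<bar>sort ((mirror y)[?n - Suc p := - r]) ! j - mirror y ! j\<bar>)"
      using sum_mirror[of "sort (y[p := r])" ?n y "\<lambda>_ a b. \<bar>a - b\<bar>"] p
      by (simp add: mirror_update sort_mirror[symmetric] abs_minus_commute)
    also have "\<dots> = y ! p - r"
      using oriented[of "mirror y" "?n - Suc p" "- r"] sorted p False by (simp add: nth_mirror)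
    finally show ?thesis using False by simp
  qed
qed

section \<open>One step of LambdaDC\<close>

lemma sorted_list_update:
  fixes x :: "'a::linorder list"
  assumes "sorted x" "i < length x" "0 < i \<Longrightarrow> x ! (i - 1) \<le> v" "Suc i < length x \<Longrightarrow> v \<le> x ! Suc i"
  shows "sorted (x[i := v])"
  unfolding sorted_iff_nth_Suc
proof (intro allI impI)
  fix j assume j: "Suc j < length (x[i := v])"
  have "x ! j \<le> x ! Suc j" using assms(1) j by (simp add: sorted_iff_nth_Suc)
  then show "x[i := v] ! j \<le> x[i := v] ! Suc j"
    using assms j by (cases "j = i"; cases "Suc j = i") auto
qed

lemma sorted_list_update2:
  fixes x :: "'a::linorder list"
  assumes sorted: "sorted x" and i: "Suc i < length x" and "x ! i \<le> a" "a \<le> b" "b \<le> x ! Suc i"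
  shows "sorted (x[i := a, Suc i := b])"
proof -
  have mono: "x ! m \<le> x ! n" if "m \<le> n" "n < length x" for m n
    using sorted that by (rule sorted_nth_mono)
  have "sorted (x[i := a])"
    using assms mono[of "i - 1" i] by (intro sorted_list_update) auto
  then show ?thesis
    by (rule sorted_list_update) (use assms mono[of "Suc i" "Suc (Suc i)"] in auto)
qed

definition move_pair :: "real list \<Rightarrow> nat \<Rightarrow> real \<Rightarrow> real \<Rightarrow> real list" where
  "move_pair x i a b = x[i := x ! i + a, Suc i := x ! Suc i - b]"

lemma length_move_pair [simp]: "length (move_pair x i a b) = length x"
  by (simp add: move_pair_def)

lemma nth_move_pair:
  assumes "Suc i < length x"
  shows "move_pair x i a b ! i = x ! i + a" "move_pair x i a b ! Suc i = x ! Suc i - b"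
    and "j \<noteq> i \<Longrightarrow> j \<noteq> Suc i \<Longrightarrow> move_pair x i a b ! j = x ! j"
  using assms by (simp_all add: move_pair_def)

lemma sorted_move_pair:
  assumes "sorted x" "Suc i < length x" "0 \<le> a" "0 \<le> b" "x ! i + a \<le> x ! Suc i - b"
  shows "sorted (move_pair x i a b)"
  unfolding move_pair_def using assms by (intro sorted_list_update2) auto

lemma ldc_time_bounds:
  fixes lam d1 d2 :: real
  assumes "0 \<le> lam" "0 < d1" "0 < d2"
  shows "0 \<le> (if lam * d1 \<le> d2 then d1 else d2 / lam)"
    and "(if lam * d1 \<le> d2 then d1 else d2 / lam) \<le> d1"
    and "lam * (if lam * d1 \<le> d2 then d1 else d2 / lam) \<le> d2"
proof -
  have "0 < lam" if "\<not> lam * d1 \<le> d2" using that assms by (cases "lam = 0") auto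
  then show "0 \<le> (if lam * d1 \<le> d2 then d1 else d2 / lam)"
    and "(if lam * d1 \<le> d2 then d1 else d2 / lam) \<le> d1"
    and "lam * (if lam * d1 \<le> d2 then d1 else d2 / lam) \<le> d2"
    using assms by (auto simp: pos_divide_le_eq mult.commute)
qed

lemma greatest_nth_less:
  fixes x :: "real list"
  assumes "r \<notin> set x" "x ! 0 < r" "r < x ! (length x - 1)"
  defines "i \<equiv> GREATEST j. j < length x \<and> x ! j < r"
  shows "Suc i < length x" "x ! i < r" "r < x ! Suc i"
proof -
  have "x \<noteq> []" using assms(2,3) by auto
  have i: "i < length x \<and> x ! i < r"
    unfolding i_def by (rule GreatestI_nat[of _ 0 "length x"]) (use assms \<open>x \<noteq> []\<close> in auto)
  show "Suc i < length x"
  proof (rule ccontr)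
    assume "\<not> Suc i < length x"
    with i have "i = length x - 1" by arith
    with i assms(3) show False by simp
  qed
  moreover have "\<not> x ! Suc i < r"
    using Greatest_le_nat[of "\<lambda>j. j < length x \<and> x ! j < r" "Suc i" "length x"] calculation
    by (auto simp flip: i_def)
  ultimately show "x ! i < r" "r < x ! Suc i"
    using i assms(1) nth_mem[of "Suc i" x] by (auto simp: not_less order.order_iff_strict)
qed

text \<open>
  Here \<open>p\<close> is the 1-based predicted index and \<open>i\<close> the 0-based index of the left neighbour of
  the request, so \<open>push_right\<close> is the case in which the predicted server is the left neighbour
  or lies further left, and the left neighbour moves at full speed.
\<close>
lemma ldc_step_cases:
  fixes x :: "real list"
  assumes ne: "x \<noteq> []" and lam: "0 \<le> lam"
  obtains (stay) "ldc_step lam x r p = (x, 0)"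
  | (left_end) "r < x ! 0" "ldc_step lam x r p = (x[0 := r], x ! 0 - r)"
  | (right_end) "x ! (length x - 1) < r"
      "ldc_step lam x r p = (x[length x - 1 := r], r - x ! (length x - 1))"
  | (push_right) i T where "Suc i < length x" "p \<le> Suc i" "0 \<le> T" "x ! i + T \<le> r" "r \<le> x ! Suc i - lam * T"
      "ldc_step lam x r p = (move_pair x i T (lam * T), (1 + lam) * T)"
  | (push_left) i T where "Suc i < length x" "Suc i < p" "0 \<le> T" "x ! i + lam * T \<le> r" "r \<le> x ! Suc i - T"
      "ldc_step lam x r p = (move_pair x i (lam * T) T, (1 + lam) * T)"
proof -
  have hd: "hd x = x ! 0" and last: "last x = x ! (length x - 1)"
    using ne by (simp_all add: hd_conv_nth last_conv_nth)
  consider "r \<in> set x" | "r \<notin> set x" "r < x ! 0" | "r \<notin> set x" "\<not> r < x ! 0" "x ! (length x - 1) < r"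
    | "r \<notin> set x" "x ! 0 < r" "r < x ! (length x - 1)"
    using ne nth_mem[of 0 x] nth_mem[of "length x - 1" x] by (cases "r \<in> set x") force+
  then show thesis
  proof cases
    case 1
    then show thesis by (intro stay) (simp add: ldc_step_def)
  next
    case 2
    then show thesis by (intro left_end) (simp_all add: ldc_step_def hd)
  next
    case 3
    then show thesis by (intro right_end) (simp_all add: ldc_step_def hd last)
  next
    case 4
    define i where "i = (GREATEST j. j < length x \<and> x ! j < r)"
    have i: "Suc i < length x" "x ! i < r" "r < x ! Suc i"
      using greatest_nth_less[OF 4] unfolding i_def by blast+
    define d1 d2 where "d1 = r - x ! i" and "d2 = x ! Suc i - r"
    have d: "0 < d1" "0 < d2" using i by (simp_all add: d1_def d2_def)
    show thesis
    proof (cases "p \<le> Suc i")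
      case True
      define T where "T = (if lam * d1 \<le> d2 then d1 else d2 / lam)"
      have "ldc_step lam x r p = (move_pair x i T (lam * T), (1 + lam) * T)"
        using 4 True unfolding ldc_step_def T_def d1_def d2_def
        by (simp add: hd last Let_def move_pair_def flip: i_def split del: if_split)
      then show thesis
        using ldc_time_bounds[OF lam d, folded T_def] i True
        by (intro push_right[of i T]) (auto simp: d1_def d2_def)
    next
      case False
      define T where "T = (if lam * d2 \<le> d1 then d2 else d1 / lam)"
      have "ldc_step lam x r p = (move_pair x i (lam * T) T, (1 + lam) * T)"
        using 4 False unfolding ldc_step_def T_def d1_def d2_def
        by (simp add: hd last Let_def move_pair_def flip: i_def split del: if_split)
      then show thesis
        using ldc_time_bounds[OF lam d(2,1), folded T_def] i False
        by (intro push_left[of i T]) (auto simp: d1_def d2_def)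
    qed
  qed
qed

lemma ldc_step_sorted:
  fixes x :: "real list"
  assumes "sorted x" "x \<noteq> []" "0 \<le> lam"
  shows "sorted (fst (ldc_step lam x r p)) \<and> length (fst (ldc_step lam x r p)) = length x"
  using assms(2,3)
proof (cases rule: ldc_step_cases[of x lam r p])
  case left_end
  then show ?thesis
    using assms sorted_nth_mono[of x 0 1] by (auto intro!: sorted_list_update)
next
  case right_end
  have "x ! (length x - 1 - 1) \<le> x ! (length x - 1)"
    using assms by (intro sorted_nth_mono) auto
  with right_end show ?thesis
    using assms by (auto intro!: sorted_list_update)
next
  case (push_right i T)
  then show ?thesis using assms sorted_move_pair[of x i T "lam * T"] by simp
next
  case (push_left i T)
  then show ?thesis using assms sorted_move_pair[of x i "lam * T" T] by simp
qed (use assms in simp)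

section \<open>The coefficients of the potential\<close>

definition dc_weight :: "real \<Rightarrow> nat \<Rightarrow> nat \<Rightarrow> real" where
  "dc_weight lam k s = (if 2 * s < k then lam ^ s else if 2 * s = k then lam ^ s / 2 else 0)"

definition dc_tail :: "real \<Rightarrow> nat \<Rightarrow> nat \<Rightarrow> real" where
  "dc_tail lam k t = (\<Sum>s = t..k. dc_weight lam k s)"

definition dc_gap :: "real \<Rightarrow> nat \<Rightarrow> nat \<Rightarrow> real" where
  "dc_gap lam k t = lam * dc_tail lam k t - dc_tail lam k (Suc t)"

definition dc_coeff :: "real \<Rightarrow> nat \<Rightarrow> nat \<Rightarrow> real" where
  "dc_coeff lam k j = 2 * dc_tail lam k (k - j) - 2 * dc_tail lam k (Suc j)"

lemma dc_weight_nonneg: "0 \<le> lam \<Longrightarrow> 0 \<le> dc_weight lam k s"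
  by (simp add: dc_weight_def)

lemma dc_tail_Suc: "dc_tail lam k t = dc_weight lam k t + dc_tail lam k (Suc t)"
proof (cases "t \<le> k")
  case True
  then show ?thesis by (simp add: dc_tail_def sum.atLeast_Suc_atMost)
qed (simp add: dc_tail_def dc_weight_def)

lemma dc_tail_nonneg: "0 \<le> lam \<Longrightarrow> 0 \<le> dc_tail lam k t"
  by (simp add: dc_tail_def sum_nonneg dc_weight_nonneg)

lemma dc_tail_antimono:
  assumes "0 \<le> lam" "t \<le> t'"
  shows "dc_tail lam k t' \<le> dc_tail lam k t"
  using assms(2)
proof (induction t' rule: dec_induct)
  case (step n)
  then show ?case using dc_tail_Suc[of lam k n] dc_weight_nonneg[OF assms(1), of k n] by linarith
qed simp

lemma alpha_k_eq_dc_tail: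
  assumes "1 \<le> k"
  shows "alpha_k lam k = 1 + 2 * dc_tail lam k 1"
proof (cases "even k")
  case True
  then obtain m where k: "k = 2 * m" by auto
  with assms have m: "Suc (m - 1) = m" by simp
  have "dc_tail lam k 1 = (\<Sum>s = 1..m. dc_weight lam k s)"
    unfolding dc_tail_def by (rule sum.mono_neutral_right) (auto simp: dc_weight_def k)
  also have "\<dots> = (\<Sum>s = 1..m - 1. dc_weight lam k s) + dc_weight lam k m"
    using sum.cl_ivl_Suc[of "dc_weight lam k" 1 "m - 1"] m by simp
  also have "\<dots> = (\<Sum>s = 1..m - 1. lam ^ s) + lam ^ m / 2"
    using m by (auto simp: dc_weight_def k intro: sum.cong)
  finally show ?thesis using True k by (simp add: alpha_k_def)
next
  case False
  then obtain m where k: "k = 2 * m + 1" using oddE by blast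
  have "dc_tail lam k 1 = (\<Sum>s = 1..m. dc_weight lam k s)"
    unfolding dc_tail_def by (rule sum.mono_neutral_right) (auto simp: dc_weight_def k)
  also have "\<dots> = (\<Sum>s = 1..m. lam ^ s)"
    by (rule sum.cong) (auto simp: dc_weight_def k)
  finally show ?thesis using False k by (simp add: alpha_k_def)
qed

lemma dc_gap_eq_sum: "dc_gap lam k t = (\<Sum>s = t..k. lam * dc_weight lam k s - dc_weight lam k (Suc s))"
proof -
  have "dc_tail lam k (Suc t) = (\<Sum>s = Suc t..Suc k. dc_weight lam k s)"
    by (simp add: dc_tail_def dc_weight_def)
  also have "\<dots> = (\<Sum>s = t..k. dc_weight lam k (Suc s))"
    by (rule sum.shift_bounds_cl_Suc_ivl)
  finally show ?thesis
    by (simp add: dc_gap_def dc_tail_def sum_distrib_left sum_subtractf)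
qed

lemma dc_gap_odd:
  assumes "k = 2 * m + 1"
  shows "dc_gap lam k t = (if t \<le> m then lam ^ Suc m else 0)"
proof -
  have "lam * dc_weight lam k s - dc_weight lam k (Suc s) = (if s = m then lam ^ Suc m else 0)" for s
    using assms by (auto simp: dc_weight_def)
  then show ?thesis using assms by (simp add: dc_gap_eq_sum)
qed

lemma dc_gap_even:
  assumes "k = 2 * m" "1 \<le> m"
  shows "dc_gap lam k t = (if t \<le> m - 1 then lam ^ m / 2 else 0) + (if t \<le> m then lam ^ Suc m / 2 else 0)"
proof -
  have "lam * dc_weight lam k s - dc_weight lam k (Suc s)
      = (if s = m - 1 then lam ^ m / 2 else 0) + (if s = m then lam ^ Suc m / 2 else 0)" for s
    using assms by (auto simp: dc_weight_def simp flip: power_Suc)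
  moreover have "m - 1 \<le> k" "m \<le> k" using assms by simp_all
  ultimately show ?thesis by (simp add: dc_gap_eq_sum sum.distrib)
qed

lemma dc_gap_exchange_even:
  assumes lam: "0 \<le> lam" "lam \<le> 1" and ab: "1 \<le> a" "1 \<le> b" "a + b = k" and k: "k = 2 * m"
  shows "dc_gap lam k 0 + dc_gap lam k (Suc b) \<le> dc_gap lam k a + dc_weight lam k b + dc_weight lam k (Suc b)"
proof -
  have pow: "lam ^ j \<le> lam ^ i" if "i \<le> j" for i j
    using that lam by (rule power_decreasing)
  have pow_nonneg: "0 \<le> lam ^ i" for i
    using lam(1) by simp
  from ab k have m: "1 \<le> m" by simp
  note gap = dc_gap_even[OF k m, of lam]
  consider "Suc b < m" | "Suc b = m" | "b = m" | "m < b" by linarith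
  then show ?thesis
  proof cases
    case 1
    then show ?thesis using ab pow[of b m] pow[of "Suc b" "Suc m"] unfolding gap by (auto simp: dc_weight_def k pow_nonneg)
  next
    case 2
    then show ?thesis using ab pow[of b "Suc m"] unfolding gap by (auto simp: dc_weight_def k pow_nonneg)
  next
    case 3
    then show ?thesis using ab unfolding gap by (auto simp: dc_weight_def k pow_nonneg)
  next
    case 4
    then show ?thesis using ab k dc_weight_nonneg[OF lam(1)] unfolding gap by (auto simp: add_nonneg_nonneg)
  qed
qed

lemma dc_gap_exchange_odd:
  assumes lam: "0 \<le> lam" "lam \<le> 1" and ab: "1 \<le> a" "1 \<le> b" "a + b = k" and k: "k = 2 * m + 1"
  shows "dc_gap lam k 0 + dc_gap lam k (Suc b) \<le> dc_gap lam k a + dc_weight lam k b + dc_weight lam k (Suc b)"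
proof -
  have pow: "lam ^ j \<le> lam ^ i" if "i \<le> j" for i j
    using that lam by (rule power_decreasing)
  have pow_nonneg: "0 \<le> lam ^ i" for i
    using lam(1) by simp
  note gap = dc_gap_odd[OF k, of lam]
  consider "Suc b \<le> m" | "b = m" | "m < b" by linarith
  then show ?thesis
  proof cases
    case 1
    then show ?thesis using ab pow[of b "Suc m"] pow[of "Suc b" "Suc m"] unfolding gap by (auto simp: dc_weight_def k pow_nonneg)
  next
    case 2
    then show ?thesis using ab pow[of m "Suc m"] unfolding gap by (auto simp: dc_weight_def k pow_nonneg)
  next
    case 3
    then show ?thesis using ab k dc_weight_nonneg[OF lam(1)] unfolding gap by (auto simp: add_nonneg_nonneg)
  qed
qed

lemma dc_gap_exchange:
  assumes "0 \<le> lam" "lam \<le> 1" "1 \<le> a" "1 \<le> b" "a + b = k"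
  shows "dc_gap lam k 0 + dc_gap lam k (Suc b) \<le> dc_gap lam k a + dc_weight lam k b + dc_weight lam k (Suc b)"
proof (cases "even k")
  case True
  then obtain m where "k = 2 * m" by auto
  then show ?thesis using dc_gap_exchange_even[OF assms] by simp
next
  case False
  then obtain m where "k = 2 * m + 1" using oddE by blast
  then show ?thesis using dc_gap_exchange_odd[OF assms] by simp
qed

lemma dc_tail_exchange:
  assumes "0 \<le> lam" "lam \<le> 1" "1 \<le> a" "1 \<le> b" "a + b = k"
  shows "lam + dc_tail lam k (Suc a) - lam * dc_tail lam k a + lam * dc_tail lam k (Suc b) - dc_tail lam k b
         \<le> (1 - lam) * dc_tail lam k 1"
proof -
  have "dc_weight lam k 0 = 1" using assms by (simp add: dc_weight_def)
  then have "dc_gap lam k 0 = lam + lam * dc_tail lam k 1 - dc_tail lam k 1"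
    using dc_tail_Suc[of lam k 0] by (simp add: dc_gap_def algebra_simps)
  moreover have "dc_tail lam k b = dc_weight lam k b + dc_weight lam k (Suc b) + dc_tail lam k (Suc (Suc b))"
    using dc_tail_Suc[of lam k b] dc_tail_Suc[of lam k "Suc b"] by simp
  ultimately show ?thesis
    using dc_gap_exchange[OF assms] by (simp add: dc_gap_def algebra_simps)
qed

section \<open>The potential\<close>

lemma sum_lessThan_split:
  fixes f :: "nat \<Rightarrow> 'a::comm_monoid_add"
  assumes "i < k"
  shows "(\<Sum>j<k. f j) = (\<Sum>j<i. f j) + f i + (\<Sum>j = Suc i..<k. f j)"
proof -
  have "(\<Sum>j<k. f j) = (\<Sum>j<Suc i. f j) + (\<Sum>j = Suc i..<k. f j)"
    using sum.atLeastLessThan_concat[of 0 "Suc i" k f] assms by (simp add: atLeast0LessThan)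
  then show ?thesis by simp
qed

definition potential :: "real \<Rightarrow> (nat \<Rightarrow> real) \<Rightarrow> real list \<Rightarrow> real list \<Rightarrow> real" where
  "potential al c x y = al * (\<Sum>j<length x. \<bar>x ! j - y ! j\<bar>) + (\<Sum>j<length x. c j * x ! j)"

text \<open>
  The mirror images of \<open>coeff_first\<close> and \<open>coeff_push\<close>, needed for requests right of all
  servers and for moves with a fast right neighbour, follow from \<open>coeff_antisym\<close>.
\<close>
locale dc_potential =
  fixes lam al :: real and c :: "nat \<Rightarrow> real" and k :: nat
  assumes lam_nonneg: "0 \<le> lam" and al_nonneg: "0 \<le> al"
    and coeff_first: "1 \<le> al + c 0"
    and coeff_push: "Suc i < k \<Longrightarrow> (1 + lam) + c i - lam * c (Suc i) \<le> al * (1 - lam)"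
    and coeff_antisym: "j < k \<Longrightarrow> c (k - Suc j) = - c j"
    and coeff_nonpos: "2 * j < k \<Longrightarrow> c j \<le> 0"

lemma dc_potential_dc_coeff:
  assumes "1 \<le> k" "0 \<le> lam" "lam \<le> 1"
  shows "dc_potential lam (alpha_k lam k) (dc_coeff lam k) k"
proof
  note tail_nonneg = dc_tail_nonneg[OF assms(2)]
  show "0 \<le> lam" by fact
  show "0 \<le> alpha_k lam k" "1 \<le> alpha_k lam k + dc_coeff lam k 0"
    using assms(1) tail_nonneg[of k 1] tail_nonneg[of k k]
    by (simp_all add: alpha_k_eq_dc_tail dc_coeff_def)
  show "(1 + lam) + dc_coeff lam k i - lam * dc_coeff lam k (Suc i) \<le> alpha_k lam k * (1 - lam)"
    if "Suc i < k" for i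
  proof -
    have "k - i = Suc (k - Suc i)" using that by simp
    then show ?thesis
      using dc_tail_exchange[OF assms(2,3), of "k - Suc i" "Suc i" k] that assms(1)
      by (simp add: alpha_k_eq_dc_tail dc_coeff_def algebra_simps)
  qed
  show "dc_coeff lam k (k - Suc j) = - dc_coeff lam k j" if "j < k" for j
    using that by (simp add: dc_coeff_def Suc_diff_Suc)
  show "dc_coeff lam k j \<le> 0" if "2 * j < k" for j
    using that dc_tail_antimono[OF assms(2), of "Suc j" "k - j" k] by (simp add: dc_coeff_def)
qed

context dc_potential
begin

lemma weighted_sum_nonneg:
  assumes "sorted x" "length x = k"
  shows "0 \<le> (\<Sum>j<k. c j * x ! j)"
proof -
  have "2 * (\<Sum>j<k. c j * x ! j) = (\<Sum>j<k. c j * x ! j) + (\<Sum>j<k. c (k - Suc j) * x ! (k - Suc j))"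
    using sum.nat_diff_reindex[of "\<lambda>j. c j * x ! j" k] by simp
  also have "\<dots> = (\<Sum>j<k. c j * (x ! j - x ! (k - Suc j)))"
    by (simp add: coeff_antisym sum_subtractf sum_negf right_diff_distrib)
  also have "\<dots> \<ge> 0"
  proof (rule sum_nonneg)
    fix j assume "j \<in> {..<k}"
    then have j: "j < k" by simp
    show "0 \<le> c j * (x ! j - x ! (k - Suc j))"
    proof (cases "2 * j < k")
      case True
      then have "x ! j \<le> x ! (k - Suc j)" using assms by (intro sorted_nth_mono) auto
      then show ?thesis using coeff_nonpos[OF True] by (simp add: mult_nonpos_nonpos)
    next
      case False
      then have "0 \<le> c j" using coeff_nonpos[of "k - Suc j"] coeff_antisym[of "k - Suc j"] j
        by (simp add: Suc_diff_Suc)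
      moreover have "x ! (k - Suc j) \<le> x ! j" using assms j False by (intro sorted_nth_mono) auto
      ultimately show ?thesis by simp
    qed
  qed
  finally show ?thesis by simp
qed

lemma potential_nonneg: "sorted x \<Longrightarrow> length x = k \<Longrightarrow> 0 \<le> potential al c x y"
  unfolding potential_def using weighted_sum_nonneg al_nonneg by (simp add: sum_nonneg)

lemma potential_mirror:
  assumes "length x = k" "length y = k"
  shows "potential al c (mirror x) (mirror y) = potential al c x y"
proof -
  have "(\<Sum>j<k. \<bar>mirror x ! j - mirror y ! j\<bar>) = (\<Sum>j<k. \<bar>x ! j - y ! j\<bar>)"
    using sum_mirror[OF assms, of "\<lambda>_ a b. \<bar>a - b\<bar>"] by (simp add: abs_minus_commute)
  moreover have "(\<Sum>j<k. c j * mirror x ! j) = (\<Sum>j<k. c j * x ! j)"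
    using sum_mirror[OF assms, of "\<lambda>j a _. c j * a"] by (simp add: coeff_antisym)
  ultimately show ?thesis using assms by (simp add: potential_def)
qed

definition coord_change :: "real list \<Rightarrow> real list \<Rightarrow> real list \<Rightarrow> real list \<Rightarrow> nat \<Rightarrow> real" where
  "coord_change x y x' y' j =
     al * (\<bar>x' ! j - y' ! j\<bar> - \<bar>x ! j - y ! j\<bar> - \<bar>y' ! j - y ! j\<bar>) + c j * (x' ! j - x ! j)"

lemma coord_change_unmoved: "x' ! j = x ! j \<Longrightarrow> coord_change x y x' y' j \<le> 0"
proof -
  assume "x' ! j = x ! j"
  moreover have "\<bar>x ! j - y' ! j\<bar> - \<bar>x ! j - y ! j\<bar> - \<bar>y' ! j - y ! j\<bar> \<le> 0" by linarith
  ultimately show ?thesis using al_nonneg by (simp add: coord_change_def mult_nonneg_nonpos)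
qed

lemma coord_change_le:
  assumes "\<bar>x' ! j - y' ! j\<bar> - \<bar>x ! j - y ! j\<bar> - \<bar>y' ! j - y ! j\<bar> \<le> B"
  shows "coord_change x y x' y' j \<le> al * B + c j * (x' ! j - x ! j)"
  unfolding coord_change_def using mult_left_mono[OF assms al_nonneg] by simp

lemma amortized_of_coord_changes:
  assumes "length x = k" "length x' = k" "length y = k" "sorted y" "p < k"
    and "L + (\<Sum>j<k. coord_change x y x' (sort (y[p := r])) j) \<le> 0"
  shows "L + potential al c x' (sort (y[p := r])) \<le> potential al c x y + al * \<bar>y ! p - r\<bar>"
proof -
  let ?y' = "sort (y[p := r])"
  have "potential al c x' ?y' - potential al c x y - al * (\<Sum>j<k. \<bar>?y' ! j - y ! j\<bar>)
      = (\<Sum>j<k. coord_change x y x' ?y' j)"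
    using assms(1,2)
    by (simp add: potential_def coord_change_def sum.distrib sum_subtractf sum_distrib_left algebra_simps)
  moreover have "(\<Sum>j<k. \<bar>?y' ! j - y ! j\<bar>) = \<bar>y ! p - r\<bar>"
    using sum_abs_sort_update[OF assms(4), of p r] assms(3,5) by simp
  ultimately show ?thesis using assms(6) by simp
qed

lemma amortized_stay:
  assumes "sorted y" "length x = k" "length y = k" "p < k"
  shows "potential al c x (sort (y[p := r])) \<le> potential al c x y + al * \<bar>y ! p - r\<bar>"
  using amortized_of_coord_changes[OF assms(2,2,3,1,4), of 0 r]
  by (simp add: sum_nonpos coord_change_unmoved)

lemma amortized_left_end:
  assumes "sorted y" "length x = k" "length y = k" "p < k" and r: "r < x ! 0"
  shows "(x ! 0 - r) + potential al c (x[0 := r]) (sort (y[p := r])) \<le> potential al c x y + al * \<bar>y ! p - r\<bar>"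
proof (rule amortized_of_coord_changes)
  let ?x' = "x[0 := r]" and ?y' = "sort (y[p := r])"
  have "r \<in> set ?y'" using assms by (simp add: set_update_memI)
  then obtain q where "q < length ?y'" "?y' ! q = r" by (auto simp only: in_set_conv_nth)
  then have y'_0: "?y' ! 0 \<le> r" using sorted_nth_mono[of ?y' 0 q] by simp
  have x'_0: "?x' ! 0 = r" using assms(2,4) by simp
  have "\<bar>?x' ! 0 - ?y' ! 0\<bar> - \<bar>x ! 0 - y ! 0\<bar> - \<bar>?y' ! 0 - y ! 0\<bar> \<le> r - x ! 0"
    unfolding x'_0 using y'_0 by linarith
  then have "coord_change x y ?x' ?y' 0 \<le> al * (r - x ! 0) + c 0 * (?x' ! 0 - x ! 0)"
    by (rule coord_change_le)
  then have "coord_change x y ?x' ?y' 0 \<le> al * (r - x ! 0) + c 0 * (r - x ! 0)"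
    unfolding x'_0 .
  moreover have "(\<Sum>j = Suc 0..<k. coord_change x y ?x' ?y' j) \<le> 0"
    by (intro sum_nonpos coord_change_unmoved) simp
  moreover have "(x ! 0 - r) + (al * (r - x ! 0) + c 0 * (r - x ! 0)) \<le> 0"
  proof -
    have "(x ! 0 - r) + (al * (r - x ! 0) + c 0 * (r - x ! 0)) = (x ! 0 - r) * (1 - (al + c 0))"
      by (simp add: algebra_simps)
    also have "\<dots> \<le> 0" using coeff_first r by (intro mult_nonneg_nonpos) simp_all
    finally show ?thesis .
  qed
  ultimately show "(x ! 0 - r) + (\<Sum>j<k. coord_change x y ?x' ?y' j) \<le> 0"
    using sum_lessThan_split[of 0 k "coord_change x y ?x' ?y'"] assms(4) by simp
qed (use assms in simp_all)

lemma amortized_right_end: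
  assumes "sorted y" "length x = k" "length y = k" "p < k" and r: "x ! (k - 1) < r"
  shows "(r - x ! (k - 1)) + potential al c (x[k - 1 := r]) (sort (y[p := r]))
         \<le> potential al c x y + al * \<bar>y ! p - r\<bar>"
proof -
  have "(mirror x ! 0 - - r) + potential al c ((mirror x)[0 := - r]) (sort ((mirror y)[k - Suc p := - r]))
        \<le> potential al c (mirror x) (mirror y) + al * \<bar>mirror y ! (k - Suc p) - - r\<bar>"
    using assms by (intro amortized_left_end) (simp_all add: nth_mirror)
  moreover have "(mirror x)[0 := - r] = mirror (x[k - 1 := r])"
    using assms(2,4) by (simp add: mirror_update)
  moreover have "sort ((mirror y)[k - Suc p := - r]) = mirror (sort (y[p := r]))"
    using assms(3,4) by (simp add: mirror_update flip: sort_mirror)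
  ultimately show ?thesis
    using assms by (simp add: potential_mirror nth_mirror abs_minus_commute)
qed

context
  fixes x y :: "real list" and p i :: nat and r T :: real
  assumes sorted_x: "sorted x" and sorted_y: "sorted y"
    and len_x: "length x = k" and len_y: "length y = k"
    and p_le_i: "p \<le> i" and i_lt: "Suc i < k"
    and T_nonneg: "0 \<le> T" and left_le: "x ! i + T \<le> r" and right_ge: "r \<le> x ! Suc i - lam * T"
  fixes x' y' :: "real list"
  defines "x' \<equiv> move_pair x i T (lam * T)" and "y' \<equiv> sort (y[p := r])"
begin

lemma pushed_nth: "x' ! i = x ! i + T" "x' ! Suc i = x ! Suc i - lam * T"
  "j \<noteq> i \<Longrightarrow> j \<noteq> Suc i \<Longrightarrow> x' ! j = x ! j"
  using i_lt len_x by (simp_all add: x'_def nth_move_pair)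

lemma lam_T_nonneg: "0 \<le> lam * T"
  using lam_nonneg T_nonneg by simp

lemma push_right_near:
  assumes near: "r \<le> y' ! i"
  shows "coord_change x y x' y' i + (\<Sum>j = Suc i..<k. coord_change x y x' y' j)
         \<le> (c i - al) * T + (al - c (Suc i)) * (lam * T)"
proof -
  have "coord_change x y x' y' i \<le> (c i - al) * T"
  proof -
    have "\<bar>x' ! i - y' ! i\<bar> - \<bar>x ! i - y ! i\<bar> - \<bar>y' ! i - y ! i\<bar> \<le> - T"
      using pushed_nth left_le near by linarith
    then have "coord_change x y x' y' i \<le> al * - T + c i * (x' ! i - x ! i)"
      by (rule coord_change_le)
    also have "\<dots> = (c i - al) * T"
      by (simp only: pushed_nth) (simp add: algebra_simps)
    finally show ?thesis .
  qed
  moreover have "coord_change x y x' y' (Suc i) \<le> (al - c (Suc i)) * (lam * T)"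
  proof -
    have "\<bar>x' ! Suc i - y' ! Suc i\<bar> - \<bar>x ! Suc i - y ! Suc i\<bar> - \<bar>y' ! Suc i - y ! Suc i\<bar> \<le> lam * T"
      using pushed_nth(2) lam_T_nonneg by linarith
    then have "coord_change x y x' y' (Suc i) \<le> al * (lam * T) + c (Suc i) * (x' ! Suc i - x ! Suc i)"
      by (rule coord_change_le)
    also have "\<dots> = (al - c (Suc i)) * (lam * T)"
      by (simp only: pushed_nth) (simp add: algebra_simps)
    finally show ?thesis .
  qed
  moreover have "(\<Sum>j = Suc (Suc i)..<k. coord_change x y x' y' j) \<le> 0"
    by (intro sum_nonpos coord_change_unmoved) (simp add: pushed_nth)
  ultimately show ?thesis
    using sum.atLeast_Suc_lessThan[OF i_lt, of "coord_change x y x' y'"] by simp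
qed

text \<open>
  If FtP's new server at position \<open>i\<close> is left of the request, FtP has moved a server to the
  right past position \<open>i\<close>, and the movement of its servers above \<open>i\<close> pays for the gap.
\<close>
lemma far_ftp_step:
  assumes far: "y' ! i < r"
  shows far_up: "j < k \<Longrightarrow> y ! j \<le> y' ! j"
    and far_keep: "j < k \<Longrightarrow> r < y' ! j \<Longrightarrow> y' ! j = y ! j"
    and far_gap: "r - y' ! i \<le> (\<Sum>j = Suc i..<k. y' ! j - y ! j)"
    and far_next: "y' ! Suc i \<le> r"
proof -
  have p_lt: "p < length y" using p_le_i i_lt len_y by simp
  have "y ! p \<le> r"
  proof (rule ccontr)
    assume "\<not> y ! p \<le> r"
    then have "r \<le> y' ! i" using sort_update_le_above[OF sorted_y p_lt] p_le_i i_lt len_y by (simp add: y'_def)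
    with far show False by simp
  qed
  note ftp = sort_update_ge[OF sorted_y p_lt this, folded y'_def]
  show "j < k \<Longrightarrow> y ! j \<le> y' ! j" "j < k \<Longrightarrow> r < y' ! j \<Longrightarrow> y' ! j = y ! j"
    using ftp(1,2) len_y by simp_all
  show "r - y' ! i \<le> (\<Sum>j = Suc i..<k. y' ! j - y ! j)"
    using ftp(4) p_le_i i_lt len_y far by simp
  have y': "sorted y'" "length y' = k" using len_y by (simp_all add: y'_def)
  have "r \<in> set y'" using p_lt by (simp add: y'_def set_update_memI)
  then obtain q where q: "q < length y'" "y' ! q = r" by (auto simp only: in_set_conv_nth)
  have "i < q"
    using sorted_nth_mono[of y' q i] y' q far i_lt by (cases "i < q") auto
  then show "y' ! Suc i \<le> r" using sorted_nth_mono[of y' "Suc i" q] y' q by simp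
qed

lemma pushed_above:
  assumes "Suc i \<le> j" "j < k"
  shows "x' ! j \<le> x ! j" "r \<le> x' ! j"
proof -
  have "x ! Suc i \<le> x ! j" using sorted_x assms len_x by (intro sorted_nth_mono) auto
  then show "x' ! j \<le> x ! j" "r \<le> x' ! j"
    using pushed_nth right_ge lam_T_nonneg assms by (cases "j = Suc i"; simp)+
qed

lemma far_coord_change_above:
  assumes far: "y' ! i < r" and j: "Suc i \<le> j" "j < k"
  shows "coord_change x y x' y' j \<le> (al + c j) * (x' ! j - x ! j) - 2 * al * (y' ! j - y ! j)"
proof -
  have "\<bar>x' ! j - y' ! j\<bar> - \<bar>x ! j - y ! j\<bar> - \<bar>y' ! j - y ! j\<bar> \<le> (x' ! j - x ! j) - 2 * (y' ! j - y ! j)"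
  proof (cases "y' ! j \<le> r")
    case True
    then have "y ! j \<le> y' ! j" "y' ! j \<le> x' ! j" "x' ! j \<le> x ! j"
      using pushed_above[OF j] far_up[OF far j(2)] by linarith+
    then show ?thesis by (simp add: abs_of_nonneg)
  next
    case False
    then have "y' ! j = y ! j" "j \<noteq> Suc i" using far_keep[OF far j(2)] far_next[OF far] by auto
    then show ?thesis using pushed_nth(3)[of j] j by simp
  qed
  then have "coord_change x y x' y' j \<le> al * ((x' ! j - x ! j) - 2 * (y' ! j - y ! j)) + c j * (x' ! j - x ! j)"
    by (rule coord_change_le)
  then show ?thesis by (simp add: algebra_simps)
qed

lemma push_right_far:
  assumes far: "y' ! i < r"
  shows "coord_change x y x' y' i + (\<Sum>j = Suc i..<k. coord_change x y x' y' j)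
         \<le> (c i - al) * T + (al - c (Suc i)) * (lam * T)"
proof -
  have moved: "(\<Sum>j = Suc i..<k. (al + c j) * (x' ! j - x ! j)) = - ((al + c (Suc i)) * (lam * T))"
  proof -
    have "(\<Sum>j = Suc (Suc i)..<k. (al + c j) * (x' ! j - x ! j)) = 0"
      by (intro sum.neutral) (simp add: pushed_nth(3))
    then show ?thesis
      using sum.atLeast_Suc_lessThan[OF i_lt, of "\<lambda>j. (al + c j) * (x' ! j - x ! j)"]
      by (simp only: pushed_nth) simp
  qed
  have "(\<Sum>j = Suc i..<k. coord_change x y x' y' j)
      \<le> (\<Sum>j = Suc i..<k. (al + c j) * (x' ! j - x ! j) - 2 * al * (y' ! j - y ! j))"
    using far_coord_change_above[OF far] by (intro sum_mono) auto
  also have "\<dots> = - ((al + c (Suc i)) * (lam * T)) - 2 * al * (\<Sum>j = Suc i..<k. y' ! j - y ! j)"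
    by (simp add: sum_subtractf moved flip: sum_distrib_left)
  also have "\<dots> \<le> - ((al + c (Suc i)) * (lam * T)) - 2 * al * (r - y' ! i)"
    using mult_left_mono[OF far_gap[OF far] al_nonneg] by simp
  finally have high: "(\<Sum>j = Suc i..<k. coord_change x y x' y' j)
      \<le> - ((al + c (Suc i)) * (lam * T)) - 2 * al * (r - y' ! i)" .
  have "\<bar>x' ! i - y' ! i\<bar> - \<bar>x ! i - y ! i\<bar> - \<bar>y' ! i - y ! i\<bar> \<le> - T + 2 * (r - y' ! i)"
    using pushed_nth(1) left_le far far_up[OF far, of i] i_lt by (simp add: abs_if)
  then have "coord_change x y x' y' i \<le> al * (- T + 2 * (r - y' ! i)) + c i * (x' ! i - x ! i)"
    by (rule coord_change_le)
  then have "coord_change x y x' y' i \<le> (c i - al) * T + 2 * al * (r - y' ! i)"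
    by (simp only: pushed_nth) (simp add: algebra_simps)
  moreover have "0 \<le> al * (lam * T)"
    using al_nonneg lam_T_nonneg by simp
  ultimately show ?thesis using high by (simp add: algebra_simps)
qed

lemma amortized_push_right:
  "(1 + lam) * T + potential al c x' y' \<le> potential al c x y + al * \<bar>y ! p - r\<bar>"
proof -
  have "(\<Sum>j<i. coord_change x y x' y' j) \<le> 0"
    by (intro sum_nonpos coord_change_unmoved) (simp add: pushed_nth)
  moreover have "coord_change x y x' y' i + (\<Sum>j = Suc i..<k. coord_change x y x' y' j)
      \<le> (c i - al) * T + (al - c (Suc i)) * (lam * T)"
    using push_right_near push_right_far by (cases "r \<le> y' ! i") auto
  moreover have "(1 + lam) * T + ((c i - al) * T + (al - c (Suc i)) * (lam * T))
      = T * ((1 + lam) + c i - lam * c (Suc i) - al * (1 - lam))"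
    by (simp add: algebra_simps)
  moreover have "T * ((1 + lam) + c i - lam * c (Suc i) - al * (1 - lam)) \<le> 0"
    using coeff_push[OF i_lt] T_nonneg by (simp add: mult_nonneg_nonpos)
  ultimately have "(1 + lam) * T + (\<Sum>j<k. coord_change x y x' y' j) \<le> 0"
    using sum_lessThan_split[of i k "coord_change x y x' y'"] i_lt by simp
  then show ?thesis
    unfolding y'_def
    by (intro amortized_of_coord_changes) (use len_x len_y sorted_y p_le_i i_lt in \<open>simp_all add: x'_def\<close>)
qed

end

lemma amortized_push_left:
  assumes sorted: "sorted x" "sorted y" and len: "length x = k" "length y = k"
    and i: "Suc i \<le> p" and p: "p < k"
    and T: "0 \<le> T" "x ! i + lam * T \<le> r" "r \<le> x ! Suc i - T"
  shows "(1 + lam) * T + potential al c (move_pair x i (lam * T) T) (sort (y[p := r]))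
         \<le> potential al c x y + al * \<bar>y ! p - r\<bar>"
proof -
  define i' where "i' = k - Suc (Suc i)"
  have idx: "k - Suc i' = Suc i" "Suc i' = k - Suc i" "k - Suc (k - Suc i) = i" "k - Suc p \<le> i'" "Suc i' < k"
    using i p by (auto simp: i'_def)
  have "(1 + lam) * T + potential al c (move_pair (mirror x) i' T (lam * T)) (sort ((mirror y)[k - Suc p := - r]))
        \<le> potential al c (mirror x) (mirror y) + al * \<bar>mirror y ! (k - Suc p) - - r\<bar>"
    by (rule amortized_push_right) (use sorted len idx T p in \<open>simp_all add: nth_mirror\<close>)
  moreover have "move_pair (mirror x) i' T (lam * T) = mirror (move_pair x i (lam * T) T)"
    using idx len i p by (simp add: move_pair_def mirror_update nth_mirror list_update_swap i'_def)
  moreover have "sort ((mirror y)[k - Suc p := - r]) = mirror (sort (y[p := r]))"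
    using len p by (simp add: mirror_update flip: sort_mirror)
  ultimately show ?thesis
    using len p by (simp add: potential_mirror nth_mirror abs_minus_commute)
qed

lemma amortized_ldc_step:
  assumes "sorted x" "sorted y" "length x = k" "length y = k" "p < k"
  shows "snd (ldc_step lam x r (Suc p)) + potential al c (fst (ldc_step lam x r (Suc p))) (sort (y[p := r]))
         \<le> potential al c x y + al * \<bar>y ! p - r\<bar>"
proof -
  have "x \<noteq> []" using assms(3,5) by auto
  show ?thesis
    using \<open>x \<noteq> []\<close> lam_nonneg
  proof (cases rule: ldc_step_cases[of x lam r "Suc p"])
    case stay
    then show ?thesis using amortized_stay assms by simp
  next
    case left_end
    then show ?thesis using amortized_left_end assms by simp
  next
    case right_end
    then show ?thesis using amortized_right_end assms by simp
  next
    case (push_right i T)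
    then show ?thesis using amortized_push_right[of x y p i T r] assms by simp
  next
    case (push_left i T)
    then show ?thesis using amortized_push_left[of x y i p T r] assms by simp
  qed
qed

lemma ldc_cost_le_ftp_cost:
  assumes "sorted x" "sorted y" "length x = k" "length y = k" "snd ` set zs \<subseteq> {1..k}"
  shows "ldc_cost lam x zs \<le> al * ftp_cost y zs + potential al c x y"
  using assms
proof (induction zs arbitrary: x y)
  case Nil
  then show ?case using potential_nonneg by simp
next
  case (Cons z zs)
  obtain r p where z: "z = (r, Suc p)" and p: "p < k"
  proof -
    have "1 \<le> snd z" "snd z \<le> k" using Cons.prems(5) by auto
    then show thesis using that[of "fst z" "snd z - 1"] by (cases z) auto
  qed
  define x' y' where "x' = fst (ldc_step lam x r (Suc p))" and "y' = sort (y[p := r])"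
  have "x \<noteq> []" using Cons.prems(3) p by auto
  then have "sorted x'" "length x' = k"
    using ldc_step_sorted[OF Cons.prems(1) _ lam_nonneg] Cons.prems(3) by (simp_all add: x'_def)
  moreover have "sorted y'" "length y' = k" using Cons.prems(4) by (simp_all add: y'_def)
  ultimately have "ldc_cost lam x' zs \<le> al * ftp_cost y' zs + potential al c x' y'"
    using Cons.IH Cons.prems(5) by simp
  then show ?case
    using amortized_ldc_step[OF Cons.prems(1-4) p, of r]
    by (simp add: z x'_def y'_def algebra_simps)
qed

end

theorem lemma8:
  fixes k :: nat and lam :: real and s0 :: "real list"
  assumes "1 \<le> k" and "0 \<le> lam" and "lam \<le> 1"
    and "length s0 = k" and "sorted s0"
  shows "\<exists>c > 0. \<forall>rs ps. length ps = length rs \<longrightarrow> (\<forall>p \<in> set ps. 1 \<le> p \<and> p \<le> k) \<longrightarrow>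
           ldc_cost lam s0 (zip rs ps) \<le> alpha_k lam k * ftp_cost s0 (zip rs ps) + c"
proof -
  interpret dc_potential lam "alpha_k lam k" "dc_coeff lam k" k
    using assms(1-3) by (rule dc_potential_dc_coeff)
  let ?c = "potential (alpha_k lam k) (dc_coeff lam k) s0 s0 + 1"
  have "0 < ?c" using potential_nonneg assms(4,5) by (simp add: add_nonneg_pos)
  moreover have "ldc_cost lam s0 (zip rs ps) \<le> alpha_k lam k * ftp_cost s0 (zip rs ps) + ?c"
    if "\<forall>p \<in> set ps. 1 \<le> p \<and> p \<le> k" for rs ps
  proof -
    have "snd ` set (zip rs ps) \<subseteq> {1..k}" using that by (auto dest: set_zip_rightD)
    then show ?thesis using ldc_cost_le_ftp_cost[of s0 s0 "zip rs ps"] assms(4,5) by simp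
  qed
  ultimately show ?thesis by blast
qed

end
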